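(* For any class $\mathcal{C}$ of functions $\{\pm1\}^d\to\{\pm1\}$, any $\mathcal{V}\subseteq2^{[d]}$, any $\varepsilon>0$ and any $n,m\in\mathbb{N}$ with $nm\varepsilon\ge2$, $$\delta_{\mathrm{gen}}(\mathcal{C},\mathcal{V},n,m,\varepsilon)\ \le\ 2\,\Pi_{\mathcal{C},\mathcal{V}}(n,2m)\,\exp(-nm\varepsilon/10).$$
   Context: For $f:\{\pm1\}^d\to\{\pm1\}$, $\mathrm{Rel}(f)=\{j\in[d]:\exists v\in\{\pm1\}^d,\ f(v|_{v_j=+1})\neq f(v|_{v_j=-1})\}$, where $v|_{v_j=b}$ is $v$ with coordinate $j$ set to $b$. For distributions $D^{(1)},\dots,D^{(n)}$ over $\{\pm1\}^d\times\{\pm1\}$, $\delta_{\mathrm{gen}}(\mathcal{C},\mathcal{V},n,m,\varepsilon,D^{(1)},\dots,D^{(n)})$ is the probability, over independent samples $S^{(i)}\sim(D^{(i)})^m$, $i\in[n]$, that there exist $h^{(1)},\dots,h^{(n)}\in\mathcal{C}$ with $\bigcup_i\mathrm{Rel}(h^{(i)})\in\mathcal{V}$ such that $\frac{1}{nm}\sum_{i}\sum_{(x,y)\in S^{(i)}}\mathbf{1}[h^{(i)}(x)\neq y]\le\varepsilon$ but $\frac1n\sum_i\Pr_{(x,y)\sim D^{(i)}}[h^{(i)}(x)\neq y]\ge4\varepsilon$. Then $\delta_{\mathrm{gen}}(\mathcal{C},\mathcal{V},n,m,\varepsilon)$ is the supremum over all $D^{(1)},\dots,D^{(n)}$. Multitask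 shattering number: for a sample $S=(x_1,\dots,x_m)$ write $f(S)=(f(x_1),\dots,f(x_m))$; $\Pi_{\mathcal{C},\mathcal{V}}(n,m)$ is the maximum over $S^{(1)},\dots,S^{(n)}\in(\{\pm1\}^d)^m$ of the number of distinct tuples $(f^{(1)}(S^{(1)}),\dots,f^{(n)}(S^{(n)}))$ with $f^{(1)},\dots,f^{(n)}\in\mathcal{C}$ and $\bigcup_i\mathrm{Rel}(f^{(i)})\in\mathcal{V}$. *)

theory Defs
  imports "HOL-Probability.Probability"
begin

(* Points of {+-1}^d are functions 'd => bool on a finite index type 'd (= [d]);
   True encodes +1, False encodes -1. Labels {+-1} are likewise bool. *)

type_synonym 'd point = "'d \<Rightarrow> bool"
type_synonym 'd hyp = "'d point \<Rightarrow> bool"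
type_synonym 'd example = "'d point \<times> bool"

definition Rel :: "('d::finite) hyp \<Rightarrow> 'd set" where
  "Rel f = {j. \<exists>v. f (v(j := True)) \<noteq> f (v(j := False))}"

(* joint distribution of independent samples S^{(i)} ~ (D^{(i)})^m, i < n;
   S i j is the j-th example of the i-th sample *)
definition sample_pmf :: "nat \<Rightarrow> nat \<Rightarrow> (nat \<Rightarrow> ('d::finite) example pmf)
    \<Rightarrow> (nat \<Rightarrow> nat \<Rightarrow> 'd example) pmf" where
  "sample_pmf n m D = Pi_pmf {..<n} (\<lambda>_. undefined) (\<lambda>i. Pi_pmf {..<m} undefined (\<lambda>_. D i))"

definition emp_err :: "nat \<Rightarrow> nat \<Rightarrow> (nat \<Rightarrow> ('d::finite) hyp) \<Rightarrow> (nat \<Rightarrow> nat \<Rightarrow> 'd example) \<Rightarrow> real" where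
  "emp_err n m h S = (1 / (real n * real m)) *
     (\<Sum>i<n. \<Sum>j<m. if h i (fst (S i j)) \<noteq> snd (S i j) then 1 else 0)"

definition true_err :: "nat \<Rightarrow> (nat \<Rightarrow> ('d::finite) example pmf) \<Rightarrow> (nat \<Rightarrow> 'd hyp) \<Rightarrow> real" where
  "true_err n D h = (1 / real n) * (\<Sum>i<n. measure_pmf.prob (D i) {(x, y). h i x \<noteq> y})"

definition bad_event :: "('d::finite) hyp set \<Rightarrow> 'd set set \<Rightarrow> nat \<Rightarrow> nat \<Rightarrow> real
    \<Rightarrow> (nat \<Rightarrow> 'd example pmf) \<Rightarrow> (nat \<Rightarrow> nat \<Rightarrow> 'd example) set" where
  "bad_event C V n m \<epsilon> D = {S. \<exists>h. (\<forall>i<n. h i \<in> C) \<and> (\<Union>i<n. Rel (h i)) \<in> V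
        \<and> emp_err n m h S \<le> \<epsilon> \<and> true_err n D h \<ge> 4 * \<epsilon>}"

definition delta_gen_D :: "('d::finite) hyp set \<Rightarrow> 'd set set \<Rightarrow> nat \<Rightarrow> nat \<Rightarrow> real
    \<Rightarrow> (nat \<Rightarrow> 'd example pmf) \<Rightarrow> real" where
  "delta_gen_D C V n m \<epsilon> D = measure_pmf.prob (sample_pmf n m D) (bad_event C V n m \<epsilon> D)"

(* supremum over all D^{(1)},...,D^{(n)} (only D i for i < n matter) *)
definition delta_gen :: "('d::finite) hyp set \<Rightarrow> 'd set set \<Rightarrow> nat \<Rightarrow> nat \<Rightarrow> real \<Rightarrow> real" where
  "delta_gen C V n m \<epsilon> = (SUP D. delta_gen_D C V n m \<epsilon> D)"

definition patterns :: "('d::finite) hyp set \<Rightarrow> 'd set set \<Rightarrow> nat \<Rightarrow> nat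
    \<Rightarrow> (nat \<Rightarrow> nat \<Rightarrow> 'd point) \<Rightarrow> bool list list set" where
  "patterns C V n m S = {map (\<lambda>i. map (\<lambda>j. h i (S i j)) [0..<m]) [0..<n] | h.
        (\<forall>i<n. h i \<in> C) \<and> (\<Union>i<n. Rel (h i)) \<in> V}"

definition shatter :: "('d::finite) hyp set \<Rightarrow> 'd set set \<Rightarrow> nat \<Rightarrow> nat \<Rightarrow> nat" where
  "shatter C V n m = Max {card (patterns C V n m S) | S. True}"

end

theory Submission
  imports Defs
begin

(*
  Symmetrization with a ghost sample.  If an admissible tuple h has empirical error at most
  \<epsilon> on the sample S but true error at least 4\<epsilon>, a multiplicative Chernoff bound shows that
  its error on an independent ghost sample S' is at least 2\<epsilon> with probability at least 1/2.
  Hence \<delta>_gen is at most twice the probability that some admissible h errs at most \<epsilon> on S and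
  at least 2\<epsilon> on S'.  The law of (S, S') is invariant under independently swapping each
  example of S with its partner in S', and once the 2nm points are fixed, h matters only through
  its labelling of them, of which there are at most \<Pi>(n, 2m).  For a fixed labelling, a
  Chernoff bound over the random swaps shows that the mistakes split as at most nm\<epsilon> versus at
  least 2nm\<epsilon> with probability at most exp(-nm\<epsilon>/10).
*)

section \<open>Products of probability mass functions\<close>

lemma measure_pair_pmf_eq_integral:
  "measure_pmf.prob (pair_pmf M N) A = (\<integral>a. measure_pmf.prob N {b. (a, b) \<in> A} \<partial>M)"
proof -
  have "emeasure (pair_pmf M N) A = (\<integral>\<^sup>+a. emeasure N {b. (a, b) \<in> A} \<partial>M)"
    unfolding pair_pmf_def emeasure_bind_pmf
    by (intro nn_integral_cong) (simp add: indicator_def emeasure_pmf_single[symmetric]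
         nn_integral_indicator[symmetric] vimage_def)
  also have "\<dots> = ennreal (\<integral>a. measure_pmf.prob N {b. (a, b) \<in> A} \<partial>M)"
    by (simp add: measure_pmf.emeasure_eq_measure nn_integral_eq_integral
        measure_pmf.integrable_const_bound[where B=1])
  finally show ?thesis
    by (simp add: measure_pmf.emeasure_eq_measure)
qed

lemma finite_set_Pi_pmf:
  fixes p :: "'a \<Rightarrow> ('b::finite) pmf"
  assumes "finite A"
  shows "finite (set_pmf (Pi_pmf A d p))"
  by (rule finite_subset[OF set_Pi_pmf_subset'[OF assms]]) (auto simp: assms)

lemma Pi_pmf_Pi_pmf_eq_map_curry:
  assumes "finite A" "finite B"
  shows "Pi_pmf A (\<lambda>_. d) (\<lambda>i. Pi_pmf B d (q i)) = map_pmf curry (Pi_pmf (A \<times> B) d (case_prod q))"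
proof (rule pmf_eqI)
  fix S :: "'a \<Rightarrow> 'b \<Rightarrow> 'c"
  let ?inside = "\<forall>i j. (i, j) \<notin> A \<times> B \<longrightarrow> S i j = d"
  have "pmf (map_pmf curry (Pi_pmf (A \<times> B) d (case_prod q))) S
      = pmf (Pi_pmf (A \<times> B) d (case_prod q)) (case_prod S)"
    by (metis curry_case_prod inj_on_def case_prod_curry pmf_map_inj')
  also have "\<dots> = (if ?inside then \<Prod>i\<in>A. \<Prod>j\<in>B. pmf (q i j) (S i j) else 0)"
    using assms by (subst pmf_Pi) (auto simp: prod.cartesian_product case_prod_unfold)
  also have "\<dots> = pmf (Pi_pmf A (\<lambda>_. d) (\<lambda>i. Pi_pmf B d (q i))) S"
  proof (cases ?inside)
    case True
    then show ?thesis
      using assms by (auto simp: pmf_Pi' fun_eq_iff intro!: prod.cong)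
  next
    case False
    then obtain i j where "(i, j) \<notin> A \<times> B" "S i j \<noteq> d" by blast
    have "pmf (Pi_pmf A (\<lambda>_. d) (\<lambda>i. Pi_pmf B d (q i))) S = 0"
    proof (cases "i \<in> A")
      case True
      with \<open>(i, j) \<notin> A \<times> B\<close> \<open>S i j \<noteq> d\<close> have "pmf (Pi_pmf B d (q i)) (S i) = 0"
        using assms by (intro pmf_Pi_outside) auto
      with True show ?thesis
        using assms by (subst pmf_Pi) auto
    next
      case False
      with \<open>S i j \<noteq> d\<close> show ?thesis
        using assms by (intro pmf_Pi_outside) (auto simp: fun_eq_iff)
    qed
    with False show ?thesis by (simp only: if_False)
  qed
  finally show "pmf (Pi_pmf A (\<lambda>_. d) (\<lambda>i. Pi_pmf B d (q i))) S
      = pmf (map_pmf curry (Pi_pmf (A \<times> B) d (case_prod q))) S"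
    by simp
qed

lemma Pi_pmf_pair_pmf:
  assumes "finite A"
  shows "Pi_pmf A (d1, d2) (\<lambda>x. pair_pmf (p x) (q x)) =
         map_pmf (\<lambda>(f, g) x. (f x, g x)) (pair_pmf (Pi_pmf A d1 p) (Pi_pmf A d2 q))"
proof (rule pmf_eqI)
  fix h :: "'a \<Rightarrow> 'b \<times> 'c"
  have inj: "inj (\<lambda>(f :: 'a \<Rightarrow> 'b, g :: 'a \<Rightarrow> 'c) x. (f x, g x))"
    by (auto simp: inj_on_def fun_eq_iff)
  have h: "h = (\<lambda>(f, g) x. (f x, g x)) (fst \<circ> h, snd \<circ> h)" by auto
  have pmf_pair_pmf: "pmf (pair_pmf M N) z = pmf M (fst z) * pmf N (snd z)"
    for M :: "'b pmf" and N :: "'c pmf" and z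
    by (cases z) (simp add: pmf_pair)
  have "pmf (map_pmf (\<lambda>(f, g) x. (f x, g x)) (pair_pmf (Pi_pmf A d1 p) (Pi_pmf A d2 q))) h
     = pmf (Pi_pmf A d1 p) (fst \<circ> h) * pmf (Pi_pmf A d2 q) (snd \<circ> h)"
    by (subst h, subst pmf_map_inj'[OF inj]) (simp add: pmf_pair)
  also have "\<dots> = pmf (Pi_pmf A (d1, d2) (\<lambda>x. pair_pmf (p x) (q x))) h"
    using assms by (auto simp: pmf_Pi pmf_pair_pmf prod.distrib prod_eq_iff)
  finally show "pmf (Pi_pmf A (d1, d2) (\<lambda>x. pair_pmf (p x) (q x))) h =
      pmf (map_pmf (\<lambda>(f, g) x. (f x, g x)) (pair_pmf (Pi_pmf A d1 p) (Pi_pmf A d2 q))) h"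
    by simp
qed

definition swap_at :: "('a \<Rightarrow> bool) \<Rightarrow> ('a \<Rightarrow> 'b \<times> 'b) \<Rightarrow> 'a \<Rightarrow> 'b \<times> 'b" where
  "swap_at \<sigma> T x = (if \<sigma> x then prod.swap (T x) else T x)"

lemma map_pmf_swap_pair_pmf_self: "map_pmf prod.swap (pair_pmf M M) = pair_pmf M M"
proof -
  have swap: "prod.swap = (\<lambda>(x, y). (y, x))" by auto
  show ?thesis using pair_commute_pmf[of M M] by (simp add: swap)
qed

lemma map_pmf_swap_if_pair_pmf:
  assumes "map_pmf prod.swap M = M"
  shows "map_pmf (\<lambda>(t, b). if b then prod.swap t else t) (pair_pmf M B) = M"
proof -
  have "map_pmf (\<lambda>(t, b). if b then prod.swap t else t) (pair_pmf M B)
      = bind_pmf B (\<lambda>b. map_pmf (\<lambda>t. if b then prod.swap t else t) M)"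
    unfolding pair_pmf_def map_bind_pmf map_return_pmf
    by (subst bind_commute_pmf) (simp add: map_pmf_def)
  also have "\<dots> = bind_pmf B (\<lambda>_. M)"
  proof (intro bind_pmf_cong refl)
    show "map_pmf (\<lambda>t. if b then prod.swap t else t) M = M" for b
      by (cases b) (simp_all add: assms)
  qed
  finally show ?thesis by simp
qed

lemma map_pmf_swap_at_Pi_pmf:
  assumes "finite A" and swap: "\<And>x. x \<in> A \<Longrightarrow> map_pmf prod.swap (p x) = p x"
  shows "map_pmf (\<lambda>(T, \<sigma>). swap_at \<sigma> T) (pair_pmf (Pi_pmf A d p) (Pi_pmf A False c)) = Pi_pmf A d p"
proof -
  let ?g = "\<lambda>(t, b). if b then prod.swap t else t"
  have factor: "(\<lambda>(T, \<sigma>). swap_at \<sigma> T) = (\<lambda>h. ?g \<circ> h) \<circ> (\<lambda>(f, g) x. (f x, g x))"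
    by (auto simp: fun_eq_iff swap_at_def)
  have "map_pmf (\<lambda>(T, \<sigma>). swap_at \<sigma> T) (pair_pmf (Pi_pmf A d p) (Pi_pmf A False c))
      = map_pmf (\<lambda>h. ?g \<circ> h) (Pi_pmf A (d, False) (\<lambda>x. pair_pmf (p x) (c x)))"
    by (simp only: factor Pi_pmf_pair_pmf[OF \<open>finite A\<close>] pmf.map_comp[symmetric])
  also have "\<dots> = Pi_pmf A d (\<lambda>x. map_pmf ?g (pair_pmf (p x) (c x)))"
    using \<open>finite A\<close> by (intro Pi_pmf_map[symmetric]) auto
  also have "\<dots> = Pi_pmf A d p"
    by (intro Pi_pmf_cong refl map_pmf_swap_if_pair_pmf swap)
  finally show ?thesis .
qed

section \<open>Exponential tail bounds\<close>

lemma measure_pmf_prob_le_expectation: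
  fixes g :: "'a \<Rightarrow> real"
  assumes "integrable (measure_pmf M) g"
    and "\<And>x. x \<in> set_pmf M \<Longrightarrow> 0 \<le> g x" and "\<And>x. x \<in> set_pmf M \<Longrightarrow> x \<in> A \<Longrightarrow> 1 \<le> g x"
  shows "measure_pmf.prob M A \<le> measure_pmf.expectation M g"
proof -
  have "measure_pmf.prob M A = measure_pmf.expectation M (indicator A)" by simp
  also have "\<dots> \<le> measure_pmf.expectation M g"
    by (intro integral_mono_AE AE_pmfI assms measure_pmf.integrable_const_bound[where B=1])
       (auto simp: indicator_def assms)
  finally show ?thesis .
qed

lemma exp_4_ln_2_minus_4_le_half: "exp (4 * (ln 2 - 1) :: real) \<le> 1/2"
proof -
  have "5/2 \<le> exp (1::real)"
    using exp_lower_Taylor_quadratic[of 1] by simp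
  then have "(5/2::real) ^ 4 \<le> exp 1 ^ 4" by (rule power_mono) simp
  also have "exp 1 ^ 4 = exp (4::real)" by (simp flip: exp_of_nat_mult)
  finally have "32 \<le> exp (4::real)" by (simp add: power_divide)
  have "exp (4 * (ln 2 - 1) :: real) = exp (4 * ln 2) / exp 4"
    by (simp add: exp_diff algebra_simps)
  also have "exp (4 * ln 2 :: real) = 16"
    using exp_of_nat_mult[of 4 "ln 2 :: real"] by simp
  also have "16 / exp 4 \<le> (16 / 32 :: real)" using \<open>32 \<le> exp 4\<close> by (simp add: divide_left_mono)
  finally show ?thesis by simp
qed

lemma prob_Pi_pmf_count_lt_half_mean_le:
  fixes p :: "'a \<Rightarrow> 'e pmf" and E :: "'a \<Rightarrow> 'e \<Rightarrow> bool"
  assumes I: "finite I" and k: "2 \<le> k"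
    and mean: "4 * k \<le> (\<Sum>x\<in>I. measure_pmf.prob (p x) {e. E x e})"
  shows "measure_pmf.prob (Pi_pmf I d p) {F. (\<Sum>x\<in>I. of_bool (E x (F x))) < 2 * k} \<le> 1/2"
proof -
  define q where "q x = measure_pmf.prob (p x) {e. E x e}" for x
  define \<phi> :: "'a \<Rightarrow> 'e \<Rightarrow> real" where "\<phi> x e = exp (- ln 2 * of_bool (E x e))" for x e
  have \<phi>_bounds: "0 \<le> \<phi> x e" "\<phi> x e \<le> 1" for x e by (auto simp: \<phi>_def)
  have \<phi>_integrable: "integrable (measure_pmf (p x)) (\<phi> x)" for x
    using \<phi>_bounds by (intro measure_pmf.integrable_const_bound[where B=1]) auto
  let ?c = "exp (ln 2 * (2 * k))"
  have "measure_pmf.prob (Pi_pmf I d p) {F. (\<Sum>x\<in>I. of_bool (E x (F x))) < 2 * k}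
      \<le> measure_pmf.expectation (Pi_pmf I d p) (\<lambda>F. ?c * (\<Prod>x\<in>I. \<phi> x (F x)))"
  proof (rule measure_pmf_prob_le_expectation)
    fix F assume "F \<in> {F. (\<Sum>x\<in>I. of_bool (E x (F x))) < 2 * k}"
    then have "0 \<le> ln 2 * (2 * k - (\<Sum>x\<in>I. of_bool (E x (F x))))" by simp
    also have "\<dots> = ln (?c * (\<Prod>x\<in>I. \<phi> x (F x)))"
      by (simp add: \<phi>_def ln_mult ln_prod I sum_distrib_left algebra_simps sum_negf)
    finally show "1 \<le> ?c * (\<Prod>x\<in>I. \<phi> x (F x))"
      by (simp add: \<phi>_def prod_pos)
  qed (use I \<phi>_integrable \<phi>_bounds in
      \<open>auto intro!: integrable_prod_Pi_pmf mult_nonneg_nonneg prod_nonneg\<close>)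
  also have "\<dots> = ?c * (\<Prod>x\<in>I. measure_pmf.expectation (p x) (\<phi> x))"
    using I \<phi>_integrable \<phi>_bounds by (simp add: expectation_prod_Pi_pmf)
  also have "\<dots> = ?c * (\<Prod>x\<in>I. 1 - q x / 2)"
  proof -
    have "measure_pmf.expectation (p x) (\<phi> x) = 1 - q x / 2" for x
    proof -
      have "\<phi> x = (\<lambda>e. 1 - indicator {e. E x e} e / 2)"
        by (auto simp: \<phi>_def fun_eq_iff indicator_def exp_minus)
      moreover have "integrable (measure_pmf (p x)) (indicator {e. E x e} :: 'e \<Rightarrow> real)"
        by (rule measure_pmf.integrable_const_bound[where B=1]) auto
      ultimately show ?thesis by (simp add: q_def)
    qed
    then show ?thesis by simp
  qed
  also have "\<dots> \<le> ?c * (\<Prod>x\<in>I. exp (- (q x / 2)))"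
  proof (intro mult_left_mono prod_mono conjI)
    fix x
    have "q x \<le> 1" by (simp add: q_def)
    then show "0 \<le> 1 - q x / 2" by simp
    show "1 - q x / 2 \<le> exp (- (q x / 2))"
      using exp_ge_add_one_self[of "- (q x / 2)"] by simp
  qed simp
  also have "\<dots> = exp (ln 2 * (2 * k) - (\<Sum>x\<in>I. q x) / 2)"
    by (simp add: exp_sum[OF I, symmetric] exp_add[symmetric] sum_negf sum_divide_distrib)
  also have "\<dots> \<le> exp (4 * (ln 2 - 1))"
  proof -
    have "(2 * k) * (ln 2 - 1) \<le> 4 * (ln 2 - 1)"
      using k ln_2_less_1 by (intro mult_right_mono_neg) auto
    then show ?thesis using mean by (simp add: q_def algebra_simps)
  qed
  also have "\<dots> \<le> 1/2" by (rule exp_4_ln_2_minus_4_le_half)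
  finally show ?thesis .
qed

definition unbalanced_swaps :: "'a set \<Rightarrow> ('a \<Rightarrow> bool) \<Rightarrow> ('a \<Rightarrow> bool) \<Rightarrow> real \<Rightarrow> ('a \<Rightarrow> bool) set" where
  "unbalanced_swaps I a b k = {\<sigma>. (\<Sum>x\<in>I. of_bool (if \<sigma> x then b x else a x)) \<le> k
      \<and> 2 * k \<le> (\<Sum>x\<in>I. of_bool (if \<sigma> x then a x else b x))}"

lemma exp_4_15_plus_exp_neg_13_30_le_2: "exp (4/15) + exp (- (13/30)) \<le> (2 :: real)"
proof -
  have "exp (4/15 :: real) \<le> 1 + 4/15 + (4/15)^2"
    by (rule exp_bound) auto
  moreover have "1 + 13/30 + (13/30)^2/2 \<le> exp (13/30 :: real)"
    by (rule exp_lower_Taylor_quadratic) auto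
  then have "exp (- (13/30 :: real)) \<le> inverse (1 + 13/30 + (13/30)^2/2)"
    unfolding exp_minus by (rule le_imp_inverse_le) (simp add: power2_eq_square)
  ultimately show ?thesis by (simp add: power2_eq_square)
qed

lemma prob_unbalanced_swaps_le:
  assumes I: "finite I" and k: "0 \<le> k"
  shows "measure_pmf.prob (Pi_pmf I False (\<lambda>_. bernoulli_pmf (1/2))) (unbalanced_swaps I a b k)
           \<le> exp (- k / 10)"
proof -
  define \<mu> \<nu> :: real where "\<mu> = 4/15" and "\<nu> = 1/6"
  define f s :: "'a \<Rightarrow> bool \<Rightarrow> real"
    where "f x b' = of_bool (if b' then b x else a x)"
      and "s x b' = of_bool (if b' then a x else b x)" for x b'
  define \<phi> where "\<phi> x b' = exp (\<mu> * s x b' - (\<mu> + \<nu>) * f x b')" for x b'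
  let ?M = "Pi_pmf I False (\<lambda>_. bernoulli_pmf (1/2))"
  let ?c = "exp ((\<nu> - \<mu>) * k)"
  \<comment> \<open>Exponential Markov bound; \<open>\<mu>\<close> and \<open>\<nu>\<close> make each factor have mean at most 1
    and \<open>\<nu> - \<mu> = -1/10\<close>.\<close>
  have "measure_pmf.prob ?M (unbalanced_swaps I a b k)
      \<le> measure_pmf.expectation ?M (\<lambda>\<sigma>. ?c * (\<Prod>x\<in>I. \<phi> x (\<sigma> x)))"
  proof (rule measure_pmf_prob_le_expectation)
    fix \<sigma> assume "\<sigma> \<in> unbalanced_swaps I a b k"
    then have "(\<Sum>x\<in>I. f x (\<sigma> x)) \<le> k" "2 * k \<le> (\<Sum>x\<in>I. s x (\<sigma> x))"
      by (auto simp: unbalanced_swaps_def f_def s_def)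
    then have "0 \<le> (\<nu> - \<mu>) * k + (\<mu> * (\<Sum>x\<in>I. s x (\<sigma> x)) - (\<mu> + \<nu>) * (\<Sum>x\<in>I. f x (\<sigma> x)))"
      by (simp add: \<mu>_def \<nu>_def)
    also have "\<dots> = ln (?c * (\<Prod>x\<in>I. \<phi> x (\<sigma> x)))"
      by (simp add: \<phi>_def ln_mult ln_prod I prod_pos sum_subtractf sum_distrib_left)
    finally show "1 \<le> ?c * (\<Prod>x\<in>I. \<phi> x (\<sigma> x))"
      by (simp add: \<phi>_def prod_pos)
  qed (use I in \<open>auto simp: \<phi>_def finite_set_Pi_pmf intro!: integrable_prod_Pi_pmf
      integrable_measure_pmf_finite mult_nonneg_nonneg prod_nonneg\<close>)
  also have "\<dots> = ?c * (\<Prod>x\<in>I. measure_pmf.expectation (bernoulli_pmf (1/2)) (\<phi> x))"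
    by (subst integral_mult_right_zero, subst expectation_prod_Pi_pmf[OF I])
       (auto simp: \<phi>_def intro!: integrable_measure_pmf_finite)
  also have "\<dots> \<le> ?c * 1"
  proof (intro mult_left_mono prod_le_1 conjI)
    fix x
    have "\<phi> x True + \<phi> x False \<le> 2"
      using exp_4_15_plus_exp_neg_13_30_le_2
      by (cases "a x"; cases "b x") (auto simp: \<phi>_def s_def f_def \<mu>_def \<nu>_def)
    then show "measure_pmf.expectation (bernoulli_pmf (1/2)) (\<phi> x) \<le> 1" by simp
  qed (auto simp: \<phi>_def)
  also have "\<dots> = exp (- k / 10)" by (simp add: \<mu>_def \<nu>_def)
  finally show ?thesis .
qed

section \<open>Symmetrization\<close>

definition admissible :: "('d::finite) hyp set \<Rightarrow> 'd set set \<Rightarrow> nat \<Rightarrow> (nat \<Rightarrow> 'd hyp) \<Rightarrow> bool" where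
  "admissible C V n h \<longleftrightarrow> (\<forall>i<n. h i \<in> C) \<and> (\<Union>i<n. Rel (h i)) \<in> V"

lemma sample_pmf_eq_map_curry:
  "sample_pmf n m D = map_pmf curry (Pi_pmf ({..<n} \<times> {..<m}) undefined (\<lambda>x. D (fst x)))"
  using Pi_pmf_Pi_pmf_eq_map_curry[of "{..<n}" "{..<m}" undefined "\<lambda>i _. D i"]
  by (simp add: sample_pmf_def case_prod_unfold)

lemma emp_err_curry:
  "emp_err n m h (curry F) =
     (\<Sum>x\<in>{..<n} \<times> {..<m}. of_bool (h (fst x) (fst (F x)) \<noteq> snd (F x))) / (real n * real m)"
  by (simp add: emp_err_def sum.cartesian_product case_prod_unfold of_bool_def)

lemma patterns_subset_lists:
  "patterns C V n m S \<subseteq> {xs. set xs \<subseteq> {ys. length ys = m} \<and> length xs = n}"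
  by (auto simp: patterns_def)

lemma finite_lists_of_lists_length_eq:
  "finite {xs :: 'a::finite list list. set xs \<subseteq> {ys. length ys = m} \<and> length xs = n}"
  using finite_lists_length_eq[of "UNIV :: 'a set" m] by (intro finite_lists_length_eq) simp

lemma finite_patterns: "finite (patterns C V n m S)"
  by (rule finite_subset[OF patterns_subset_lists finite_lists_of_lists_length_eq])

lemma card_patterns_le_shatter: "card (patterns C V n m S) \<le> shatter C V n m"
proof -
  have "{card (patterns C V n m S') | S'. True}
      \<subseteq> {..card {xs :: bool list list. set xs \<subseteq> {ys. length ys = m} \<and> length xs = n}}"
    using card_mono[OF finite_lists_of_lists_length_eq patterns_subset_lists] by auto
  then have "finite {card (patterns C V n m S') | S'. True}"
    by (rule finite_subset) simp
  then show ?thesis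
    unfolding shatter_def by (intro Max_ge) auto
qed

definition ghost_gap_event :: "('d::finite) hyp set \<Rightarrow> 'd set set \<Rightarrow> nat \<Rightarrow> nat \<Rightarrow> real
    \<Rightarrow> (nat \<times> nat \<Rightarrow> 'd example \<times> 'd example) set" where
  "ghost_gap_event C V n m \<epsilon> = {T. \<exists>h. admissible C V n h
      \<and> emp_err n m h (curry (fst \<circ> T)) \<le> \<epsilon> \<and> 2 * \<epsilon> \<le> emp_err n m h (curry (snd \<circ> T))}"

definition ghost_points ::
    "nat \<Rightarrow> (nat \<times> nat \<Rightarrow> ('d::finite) example \<times> 'd example) \<Rightarrow> nat \<Rightarrow> nat \<Rightarrow> 'd point" where
  "ghost_points m T i j = (if j < m then fst (fst (T (i, j))) else fst (snd (T (i, j - m))))"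

lemma swap_ghost_gap_event_subset:
  assumes "0 < n" "0 < m"
  shows "{\<sigma>. swap_at \<sigma> T \<in> ghost_gap_event C V n m \<epsilon>}
    \<subseteq> (\<Union>p\<in>patterns C V n (2 * m) (ghost_points m T).
          unbalanced_swaps ({..<n} \<times> {..<m}) (\<lambda>x. p ! fst x ! snd x \<noteq> snd (fst (T x)))
            (\<lambda>x. p ! fst x ! (m + snd x) \<noteq> snd (snd (T x))) (real n * real m * \<epsilon>))"
proof
  let ?I = "{..<n} \<times> {..<m}"
  fix \<sigma> assume "\<sigma> \<in> {\<sigma>. swap_at \<sigma> T \<in> ghost_gap_event C V n m \<epsilon>}"
  then obtain h where adm: "admissible C V n h"
    and first: "emp_err n m h (curry (fst \<circ> swap_at \<sigma> T)) \<le> \<epsilon>"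
    and second: "2 * \<epsilon> \<le> emp_err n m h (curry (snd \<circ> swap_at \<sigma> T))"
    unfolding ghost_gap_event_def by auto
  define p where "p = map (\<lambda>i. map (\<lambda>j. h i (ghost_points m T i j)) [0..<2 * m]) [0..<n]"
  define a b where "a x = (p ! fst x ! snd x \<noteq> snd (fst (T x)))"
    and "b x = (p ! fst x ! (m + snd x) \<noteq> snd (snd (T x)))" for x
  have "p \<in> patterns C V n (2 * m) (ghost_points m T)"
    using adm by (auto simp: patterns_def p_def admissible_def)
  have "a x = (h (fst x) (fst (fst (T x))) \<noteq> snd (fst (T x)))"
    and "b x = (h (fst x) (fst (snd (T x))) \<noteq> snd (snd (T x)))" if "x \<in> ?I" for x
    using that by (auto simp: a_def b_def p_def ghost_points_def)
  then have "(h (fst x) (fst (fst (swap_at \<sigma> T x))) \<noteq> snd (fst (swap_at \<sigma> T x)))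
        = (if \<sigma> x then b x else a x)"
    and "(h (fst x) (fst (snd (swap_at \<sigma> T x))) \<noteq> snd (snd (swap_at \<sigma> T x)))
        = (if \<sigma> x then a x else b x)"
    if "x \<in> ?I" for x
    using that by (auto simp: swap_at_def)
  then have "emp_err n m h (curry (fst \<circ> swap_at \<sigma> T))
        = (\<Sum>x\<in>?I. of_bool (if \<sigma> x then b x else a x)) / (real n * real m)"
    and "emp_err n m h (curry (snd \<circ> swap_at \<sigma> T))
        = (\<Sum>x\<in>?I. of_bool (if \<sigma> x then a x else b x)) / (real n * real m)"
    unfolding emp_err_curry by (auto intro!: sum.cong arg_cong[where f = "\<lambda>s. s / _"])
  with first second assms have "\<sigma> \<in> unbalanced_swaps ?I a b (real n * real m * \<epsilon>)"
    by (simp add: unbalanced_swaps_def field_simps)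
  with \<open>p \<in> _\<close> show "\<sigma> \<in> (\<Union>p\<in>patterns C V n (2 * m) (ghost_points m T).
          unbalanced_swaps ?I (\<lambda>x. p ! fst x ! snd x \<noteq> snd (fst (T x)))
            (\<lambda>x. p ! fst x ! (m + snd x) \<noteq> snd (snd (T x))) (real n * real m * \<epsilon>))"
    unfolding a_def b_def by blast
qed

lemma prob_swap_ghost_gap_event_le:
  assumes "0 < n" "0 < m" "0 \<le> \<epsilon>"
  shows "measure_pmf.prob (Pi_pmf ({..<n} \<times> {..<m}) False (\<lambda>_. bernoulli_pmf (1/2)))
      {\<sigma>. swap_at \<sigma> T \<in> ghost_gap_event C V n m \<epsilon>}
    \<le> real (shatter C V n (2 * m)) * exp (- (real n * real m * \<epsilon>) / 10)"
proof -
  let ?M = "Pi_pmf ({..<n} \<times> {..<m}) False (\<lambda>_. bernoulli_pmf (1/2))"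
  let ?P = "patterns C V n (2 * m) (ghost_points m T)"
  let ?E = "\<lambda>p. unbalanced_swaps ({..<n} \<times> {..<m}) (\<lambda>x. p ! fst x ! snd x \<noteq> snd (fst (T x)))
            (\<lambda>x. p ! fst x ! (m + snd x) \<noteq> snd (snd (T x))) (real n * real m * \<epsilon>)"
  have "measure_pmf.prob ?M {\<sigma>. swap_at \<sigma> T \<in> ghost_gap_event C V n m \<epsilon>}
      \<le> measure_pmf.prob ?M (\<Union>p\<in>?P. ?E p)"
    using swap_ghost_gap_event_subset[OF assms(1,2)] by (rule measure_pmf.finite_measure_mono) simp
  also have "\<dots> \<le> (\<Sum>p\<in>?P. measure_pmf.prob ?M (?E p))"
    by (rule measure_pmf.finite_measure_subadditive_finite) (auto simp: finite_patterns)
  also have "\<dots> \<le> (\<Sum>p\<in>?P. exp (- (real n * real m * \<epsilon>) / 10))"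
    using assms by (intro sum_mono prob_unbalanced_swaps_le) auto
  also have "\<dots> \<le> real (shatter C V n (2 * m)) * exp (- (real n * real m * \<epsilon>) / 10)"
    by (simp add: card_patterns_le_shatter)
  finally show ?thesis .
qed

lemma prob_ghost_gap_event_ge_half:
  fixes D :: "nat \<Rightarrow> ('d::finite) example pmf"
  assumes n: "0 < n" and m: "0 < m" and k: "2 \<le> real n * real m * \<epsilon>"
    and bad: "curry F \<in> bad_event C V n m \<epsilon> D"
  shows "1/2 \<le> measure_pmf.prob (Pi_pmf ({..<n} \<times> {..<m}) undefined (\<lambda>x. D (fst x)))
                 {F'. (\<lambda>x. (F x, F' x)) \<in> ghost_gap_event C V n m \<epsilon>}"
proof -
  let ?I = "{..<n} \<times> {..<m}" and ?k = "real n * real m * \<epsilon>"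
  let ?P = "Pi_pmf ?I undefined (\<lambda>x. D (fst x))"
  let ?G = "{F'. (\<lambda>x. (F x, F' x)) \<in> ghost_gap_event C V n m \<epsilon>}"
  obtain h where adm: "admissible C V n h" and emp: "emp_err n m h (curry F) \<le> \<epsilon>"
    and true: "4 * \<epsilon> \<le> true_err n D h"
    using bad unfolding bad_event_def admissible_def by auto
  define E where "E x e = (h (fst x) (fst e) \<noteq> snd e)" for x :: "nat \<times> nat" and e
  have "(\<Sum>x\<in>?I. measure_pmf.prob (D (fst x)) {e. E x e}) = real m * (real n * true_err n D h)"
  proof -
    have "{(x, y). h i x \<noteq> y} = {e. E (i, j) e}" for i j by (auto simp: E_def)
    then show ?thesis
      using n by (simp add: true_err_def sum.cartesian_product' sum_distrib_left)
  qed
  also have "\<dots> \<ge> real m * (real n * (4 * \<epsilon>))"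
    using true by (intro mult_left_mono) auto
  finally have mean: "4 * ?k \<le> (\<Sum>x\<in>?I. measure_pmf.prob (D (fst x)) {e. E x e})"
    by (simp add: algebra_simps)
  have "{F'. (\<Sum>x\<in>?I. of_bool (E x (F' x))) < 2 * ?k} \<supseteq> - ?G"
  proof
    fix F' assume "F' \<in> - ?G"
    then have "emp_err n m h (curry F') < 2 * \<epsilon>"
      using adm emp by (force simp: ghost_gap_event_def comp_def)
    then show "F' \<in> {F'. (\<Sum>x\<in>?I. of_bool (E x (F' x))) < 2 * ?k}"
      using n m by (simp add: emp_err_curry E_def field_simps)
  qed
  have "1 - measure_pmf.prob ?P ?G = measure_pmf.prob ?P (- ?G)"
    using measure_pmf.prob_compl[of ?G ?P] by (simp add: Compl_eq_Diff_UNIV)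
  also have "\<dots> \<le> measure_pmf.prob ?P {F'. (\<Sum>x\<in>?I. of_bool (E x (F' x))) < 2 * ?k}"
    using \<open>_ \<supseteq> - ?G\<close> by (rule measure_pmf.finite_measure_mono) simp
  also have "\<dots> \<le> 1/2"
    using k mean by (intro prob_Pi_pmf_count_lt_half_mean_le) auto
  finally show ?thesis by simp
qed

lemma delta_gen_D_le_ghost_gap:
  fixes D :: "nat \<Rightarrow> ('d::finite) example pmf"
  assumes n: "0 < n" and m: "0 < m" and k: "2 \<le> real n * real m * \<epsilon>"
  shows "delta_gen_D C V n m \<epsilon> D \<le> 2 * measure_pmf.prob
           (Pi_pmf ({..<n} \<times> {..<m}) (undefined, undefined) (\<lambda>x. pair_pmf (D (fst x)) (D (fst x))))
           (ghost_gap_event C V n m \<epsilon>)"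
proof -
  let ?P = "Pi_pmf ({..<n} \<times> {..<m}) undefined (\<lambda>x. D (fst x))"
  let ?G = "ghost_gap_event C V n m \<epsilon>"
  have "delta_gen_D C V n m \<epsilon> D / 2
      = (\<integral>F. indicator {F. curry F \<in> bad_event C V n m \<epsilon> D} F / 2 \<partial>?P)"
    by (simp add: delta_gen_D_def sample_pmf_eq_map_curry vimage_def)
  also have "\<dots> \<le> (\<integral>F. measure_pmf.prob ?P {F'. (\<lambda>x. (F x, F' x)) \<in> ?G} \<partial>?P)"
    using prob_ghost_gap_event_ge_half[OF n m k]
    by (intro integral_mono_AE AE_pmfI integrable_measure_pmf_finite finite_set_Pi_pmf)
       (auto simp: indicator_def)
  also have "\<dots> = measure_pmf.prob (map_pmf (\<lambda>(f, g) x. (f x, g x)) (pair_pmf ?P ?P)) ?G"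
    by (simp add: measure_pair_pmf_eq_integral)
  also have "\<dots> = measure_pmf.prob
      (Pi_pmf ({..<n} \<times> {..<m}) (undefined, undefined) (\<lambda>x. pair_pmf (D (fst x)) (D (fst x)))) ?G"
    by (simp add: Pi_pmf_pair_pmf)
  finally show ?thesis by simp
qed

lemma prob_ghost_gap_event_le:
  fixes D :: "nat \<Rightarrow> ('d::finite) example pmf"
  assumes n: "0 < n" and m: "0 < m" and \<epsilon>: "0 \<le> \<epsilon>"
  shows "measure_pmf.prob
           (Pi_pmf ({..<n} \<times> {..<m}) (undefined, undefined) (\<lambda>x. pair_pmf (D (fst x)) (D (fst x))))
           (ghost_gap_event C V n m \<epsilon>)
    \<le> real (shatter C V n (2 * m)) * exp (- (real n * real m * \<epsilon>) / 10)"
proof -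
  let ?Q = "Pi_pmf ({..<n} \<times> {..<m}) (undefined, undefined) (\<lambda>x. pair_pmf (D (fst x)) (D (fst x)))"
  let ?coins = "Pi_pmf ({..<n} \<times> {..<m}) False (\<lambda>_. bernoulli_pmf (1/2))"
  let ?G = "ghost_gap_event C V n m \<epsilon>"
  let ?bound = "real (shatter C V n (2 * m)) * exp (- (real n * real m * \<epsilon>) / 10)"
  have "map_pmf (\<lambda>(T, \<sigma>). swap_at \<sigma> T) (pair_pmf ?Q ?coins) = ?Q"
    by (rule map_pmf_swap_at_Pi_pmf) (simp_all add: map_pmf_swap_pair_pmf_self)
  then have "measure_pmf.prob ?Q ?G
      = measure_pmf.prob (pair_pmf ?Q ?coins) ((\<lambda>(T, \<sigma>). swap_at \<sigma> T) -` ?G)"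
    by (metis measure_map_pmf)
  also have "\<dots> = (\<integral>T. measure_pmf.prob ?coins {\<sigma>. swap_at \<sigma> T \<in> ?G} \<partial>?Q)"
    by (simp add: measure_pair_pmf_eq_integral)
  also have "\<dots> \<le> (\<integral>T. ?bound \<partial>?Q)"
    using prob_swap_ghost_gap_event_le[OF n m \<epsilon>]
    by (intro integral_mono_AE AE_pmfI integrable_measure_pmf_finite finite_set_Pi_pmf) auto
  finally show ?thesis by simp
qed

theorem mainTheorem6:
  fixes C :: "('d::finite) hyp set" and V :: "'d set set"
    and n m :: nat and \<epsilon> :: real
  assumes "\<epsilon> > 0" and "real n * real m * \<epsilon> \<ge> 2"
  shows "delta_gen C V n m \<epsilon>
           \<le> 2 * real (shatter C V n (2 * m)) * exp (- (real n * real m * \<epsilon>) / 10)"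
proof -
  from assms(2) have n: "0 < n" and m: "0 < m" by (auto intro: gr0I)
  have "delta_gen_D C V n m \<epsilon> D
      \<le> 2 * real (shatter C V n (2 * m)) * exp (- (real n * real m * \<epsilon>) / 10)"
    for D :: "nat \<Rightarrow> 'd example pmf"
    using delta_gen_D_le_ghost_gap[OF n m assms(2), of C V D]
      prob_ghost_gap_event_le[OF n m less_imp_le[OF assms(1)], of D C V]
    by linarith
  then show ?thesis
    unfolding delta_gen_def by (intro cSUP_least) auto
qed

end
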